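(* In type $C_\infty$, let $b\ge1$ and $\nu=(\mu_1,\mu_2,\nu_1,\dots,\nu_b)\in I^{b+2}$. Then \[\psi_{b+1}\Psi[2,b]e(\nu)=\Psi[2,b]\psi_1e(\nu)+\sum_{k=1}^b\Psi_2(k,2,b-k)\,c_k\,\Psi[2,k-1]e(\nu),\] where $c_k=x_k+x_{k+2}$ if $(\mu_1,\mu_2,\nu_k)=(1,0,1)$, $c_k=1$ if $(\mu_1,\mu_2,\nu_k)=(i,i\pm1,i)$ for some $i$ with $\mu_2\ne0$, and $c_k=0$ otherwise.
   Context: Type $C_\infty$: $I=\mathbb Z_{\ge0}$. Quiver Hecke algebra with $Q_{ii}=0$, $Q_{ji}(u,v)=Q_{ij}(v,u)$, for $i<j$: $Q_{01}=u+v^2$, $Q_{i,i+1}=u+v$ ($i\ge1$), else $1$; standard relations $\psi_re(\nu)=e(s_r\nu)\psi_r$, $x_r\psi_re(\nu)=(\psi_rx_{r+1}-\delta_{\nu_r\nu_{r+1}})e(\nu)$, $x_{r+1}\psi_re(\nu)=(\psi_rx_r+\delta_{\nu_r\nu_{r+1}})e(\nu)$, $\psi_r^2e(\nu)=Q_{\nu_r\nu_{r+1}}(x_r,x_{r+1})e(\nu)$, distant commutation, and $(\psi_{r+1}\psi_r\psi_{r+1}-\psi_r\psi_{r+1}\psi_r)e(\nu)=\delta_{\nu_r\nu_{r+2}}\frac{Q_{\nu_r\nu_{r+1}}(x_r,x_{r+1})-Q_{\nu_r\nu_{r+1}}(x_{r+2},x_{r+1})}{x_r-x_{r+2}}e(\nu)$.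 For $a,b\ge0$, $w[a,b]\in\mathfrak S_n$ maps $x\mapsto x+b$ ($1\le x\le a$), $x\mapsto x-a$ ($a<x\le a+b$), and fixes $x>a+b$; it is fully commutative with reduced expression $(s_b\cdots s_1)(s_{b+1}\cdots s_2)\cdots(s_{a+b-1}\cdots s_a)$. For $c\ge0$, $S_2(c,a,b)$ is obtained from this reduced expression by replacing each $s_i$ with $s_{i+c}$; $\Psi_2(c,a,b)$ is the corresponding product of $\psi$'s (well defined), and $\Psi[a,b]=\Psi_2(0,a,b)$; in particular $\Psi[2,0]=1$. *)

theory Defs
  imports Main
begin

text \<open>Quiver Hecke algebra of type C-infinity, index set I = nat.
  Sequences nu in I^n are lists of length n; entry nu_r (1-based) is nu ! (r - 1).
  Generators: e nu (idempotents), x r (1 <= r <= n), psi r (1 <= r < n), in a ring 'a.\<close>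

text \<open>The action of the simple transposition s_r on a sequence (positions r, r+1, 1-based).\<close>
definition klr_swap :: "nat \<Rightarrow> nat list \<Rightarrow> nat list" where
  "klr_swap r nu = nu[r - 1 := nu ! r, r := nu ! (r - 1)]"

definition klr_Qlt :: "nat \<Rightarrow> nat \<Rightarrow> 'a::ring_1 \<Rightarrow> 'a \<Rightarrow> 'a" where
  "klr_Qlt i j u v =
     (if i = 0 \<and> j = 1 then u + v ^ 2 else if j = i + 1 then u + v else 1)"

definition klr_Q :: "nat \<Rightarrow> nat \<Rightarrow> 'a::ring_1 \<Rightarrow> 'a \<Rightarrow> 'a" where
  "klr_Q i j u v =
     (if i = j then 0 else if i < j then klr_Qlt i j u v else klr_Qlt j i v u)"

text \<open>The divided difference (Q_ij(u,v) - Q_ij(w,v)) / (u - w), as a polynomial in u, v, w,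
  written out explicitly (see the sanity lemma klr_dd_correct below).\<close>
definition klr_dd :: "nat \<Rightarrow> nat \<Rightarrow> 'a::ring_1 \<Rightarrow> 'a \<Rightarrow> 'a \<Rightarrow> 'a" where
  "klr_dd i j u v w =
     (if i = j then 0
      else if i < j then (if (i = 0 \<and> j = 1) \<or> j = i + 1 then 1 else 0)
      else (if j = 0 \<and> i = 1 then u + w else if i = j + 1 then 1 else 0))"

lemma klr_dd_correct:
  fixes u v w :: "'a::comm_ring_1"
  shows "(u - w) * klr_dd i j u v w = klr_Q i j u v - klr_Q i j w v"
  by (auto simp: klr_dd_def klr_Q_def klr_Qlt_def algebra_simps power2_eq_square)

definition is_klr_Cinf ::
  "nat \<Rightarrow> (nat list \<Rightarrow> 'a::ring_1) \<Rightarrow> (nat \<Rightarrow> 'a) \<Rightarrow> (nat \<Rightarrow> 'a) \<Rightarrow> bool" where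
  "is_klr_Cinf n e x psi \<longleftrightarrow>
    (\<forall>nu nu'. length nu = n \<longrightarrow> length nu' = n \<longrightarrow>
        e nu * e nu' = (if nu = nu' then e nu else 0)) \<and>
    (\<forall>nu r. length nu = n \<longrightarrow> 1 \<le> r \<longrightarrow> r \<le> n \<longrightarrow> x r * e nu = e nu * x r) \<and>
    (\<forall>r s. 1 \<le> r \<longrightarrow> r \<le> n \<longrightarrow> 1 \<le> s \<longrightarrow> s \<le> n \<longrightarrow> x r * x s = x s * x r) \<and>
    (\<forall>nu r. length nu = n \<longrightarrow> 1 \<le> r \<longrightarrow> r < n \<longrightarrow>
        psi r * e nu = e (klr_swap r nu) * psi r) \<and>
    (\<forall>nu r. length nu = n \<longrightarrow> 1 \<le> r \<longrightarrow> r < n \<longrightarrow>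
        x r * psi r * e nu
          = psi r * x (r + 1) * e nu - (if nu ! (r - 1) = nu ! r then e nu else 0)) \<and>
    (\<forall>nu r. length nu = n \<longrightarrow> 1 \<le> r \<longrightarrow> r < n \<longrightarrow>
        x (r + 1) * psi r * e nu
          = psi r * x r * e nu + (if nu ! (r - 1) = nu ! r then e nu else 0)) \<and>
    (\<forall>nu r. length nu = n \<longrightarrow> 1 \<le> r \<longrightarrow> r < n \<longrightarrow>
        psi r * psi r * e nu = klr_Q (nu ! (r - 1)) (nu ! r) (x r) (x (r + 1)) * e nu) \<and>
    (\<forall>r s. 1 \<le> r \<longrightarrow> r < n \<longrightarrow> 1 \<le> s \<longrightarrow> s \<le> n \<longrightarrow> s \<noteq> r \<longrightarrow> s \<noteq> r + 1 \<longrightarrow>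
        psi r * x s = x s * psi r) \<and>
    (\<forall>r s. 1 \<le> r \<longrightarrow> r < n \<longrightarrow> 1 \<le> s \<longrightarrow> s < n \<longrightarrow> (r + 1 < s \<or> s + 1 < r) \<longrightarrow>
        psi r * psi s = psi s * psi r) \<and>
    (\<forall>nu r. length nu = n \<longrightarrow> 1 \<le> r \<longrightarrow> r + 1 < n \<longrightarrow>
        (psi (r + 1) * psi r * psi (r + 1) - psi r * psi (r + 1) * psi r) * e nu
          = (if nu ! (r - 1) = nu ! (r + 1)
             then klr_dd (nu ! (r - 1)) (nu ! r) (x r) (x (r + 1)) (x (r + 2)) * e nu
             else 0))"

text \<open>Reduced word of S_2(c,a,b): (s_{b+c} ... s_{1+c})(s_{b+1+c} ... s_{2+c}) ... (s_{a+b-1+c} ... s_{a+c}).\<close>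
definition klr_word :: "nat \<Rightarrow> nat \<Rightarrow> nat \<Rightarrow> nat list" where
  "klr_word c a b = concat (map (\<lambda>j. rev [j + c..<j + c + b]) [1..<a + 1])"

definition Psi2 :: "(nat \<Rightarrow> 'a::monoid_mult) \<Rightarrow> nat \<Rightarrow> nat \<Rightarrow> nat \<Rightarrow> 'a" where
  "Psi2 psi c a b = prod_list (map psi (klr_word c a b))"

lemma "klr_word 0 2 3 = [3,2,1,4,3,2]" by (simp add: klr_word_def upt_rec)

end

theory Submission
  imports Defs
begin

text \<open>Write \<open>P\<^sub>b = \<Psi>[2,b]\<close>. Splitting off the first two letters of its reduced word gives
  \<open>P\<^sub>b\<^sub>+\<^sub>1 = \<psi>\<^sub>b\<^sub>+\<^sub>1 \<psi>\<^sub>b\<^sub>+\<^sub>2 P\<^sub>b\<close>, so \<open>\<psi>\<^sub>b\<^sub>+\<^sub>2 P\<^sub>b\<^sub>+\<^sub>1\<close> starts with the braid word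
  \<open>\<psi>\<^sub>b\<^sub>+\<^sub>2 \<psi>\<^sub>b\<^sub>+\<^sub>1 \<psi>\<^sub>b\<^sub>+\<^sub>2\<close>. Moving \<open>e(\<nu>)\<close> through \<open>P\<^sub>b\<close> turns it into \<open>e(w[2,b]\<nu>)\<close>, whose
  strands \<open>b+1, b+2, b+3\<close> carry \<open>\<mu>\<^sub>1, \<mu>\<^sub>2, \<nu>\<^sub>b\<^sub>+\<^sub>1\<close>; the braid relation there produces
  \<open>\<psi>\<^sub>b\<^sub>+\<^sub>1 \<psi>\<^sub>b\<^sub>+\<^sub>2 \<psi>\<^sub>b\<^sub>+\<^sub>1 P\<^sub>b\<close> plus the error term \<open>c\<^sub>b\<^sub>+\<^sub>1 P\<^sub>b\<close>. Induction on \<open>b\<close> applied to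
  \<open>\<psi>\<^sub>b\<^sub>+\<^sub>1 P\<^sub>b\<close> does the rest, since \<open>\<psi>\<^sub>b\<^sub>+\<^sub>1 \<psi>\<^sub>b\<^sub>+\<^sub>2 \<Psi>\<^sub>2(k,2,b-k) = \<Psi>\<^sub>2(k,2,b+1-k)\<close>.\<close>

lemma length_klr_swap [simp]: "length (klr_swap r nu) = length nu"
  by (simp add: klr_swap_def)

lemma length_foldr_klr_swap [simp]: "length (foldr klr_swap ws nu) = length nu"
  by (induction ws) auto

lemma nth_klr_swap:
  assumes "1 \<le> r" "r < length nu" "i < length nu"
  shows "klr_swap r nu ! i = (if i = r - 1 then nu ! r else if i = r then nu ! (r - 1) else nu ! i)"
  using assms by (auto simp: klr_swap_def nth_list_update)

lemma nth_foldr_klr_swap_cycle: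
  assumes "1 \<le> j" "j + m \<le> length nu" "i < length nu"
  shows "foldr klr_swap (rev [j..<j + m]) nu ! i =
     (if i < j - 1 then nu ! i else if i < j + m - 1 then nu ! (i + 1)
      else if i = j + m - 1 then nu ! (j - 1) else nu ! i)"
  using assms
proof (induction m arbitrary: i)
  case 0
  then show ?case by auto
next
  case (Suc m)
  let ?L = "foldr klr_swap (rev [j..<j + m]) nu"
  have step: "foldr klr_swap (rev [j..<j + Suc m]) nu = klr_swap (j + m) ?L"
    by simp
  have IH: "?L ! i = (if i < j - 1 then nu ! i else if i < j + m - 1 then nu ! (i + 1)
      else if i = j + m - 1 then nu ! (j - 1) else nu ! i)"
    using Suc by simp
  consider "i = j + m - 1" | "i = j + m" | "i \<noteq> j + m - 1" "i \<noteq> j + m"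
    by blast
  then show ?case
  proof cases
    case 1
    moreover have "?L ! (j + m) = nu ! (j + m)"
      using Suc by auto
    ultimately show ?thesis
      unfolding step using Suc.prems by (auto simp: nth_klr_swap)
  next
    case 2
    moreover have "?L ! (j + m - 1) = nu ! (j - 1)"
      using Suc by auto
    ultimately show ?thesis
      unfolding step using Suc.prems by (auto simp: nth_klr_swap)
  next
    case 3
    then show ?thesis
      unfolding step using Suc.prems IH by (auto simp: nth_klr_swap)
  qed
qed

lemma klr_word_two: "klr_word c 2 b = rev [c + 1..<c + 1 + b] @ rev [c + 2..<c + 2 + b]"
  by (simp add: klr_word_def upt_rec add_ac)

lemma Psi2_zero [simp]: "Psi2 psi c a 0 = 1"
  by (induction a) (simp_all add: Psi2_def klr_word_def)

lemma nth_foldr_klr_word_two: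
  assumes "b + 2 < length nu"
  shows "foldr klr_swap (klr_word 0 2 b) nu ! b = nu ! 0"
    and "foldr klr_swap (klr_word 0 2 b) nu ! (b + 1) = nu ! 1"
    and "foldr klr_swap (klr_word 0 2 b) nu ! (b + 2) = nu ! (b + 2)"
proof -
  define nu2 where "nu2 = foldr klr_swap (rev [2..<2 + b]) nu"
  have word: "foldr klr_swap (klr_word 0 2 b) nu = foldr klr_swap (rev [1..<1 + b]) nu2"
    unfolding klr_word_two[of 0 b, unfolded add_0] nu2_def by simp
  have outer: "foldr klr_swap (rev [1..<1 + b]) nu2 ! i =
      (if i < b then nu2 ! (i + 1) else if i = b then nu2 ! 0 else nu2 ! i)"
    if "i < length nu" for i
    using nth_foldr_klr_swap_cycle[of 1 b nu2 i] that assms by (simp add: nu2_def)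
  have inner: "nu2 ! i =
      (if i < 1 then nu ! i else if i < b + 1 then nu ! (i + 1)
       else if i = b + 1 then nu ! 1 else nu ! i)"
    if "i < length nu" for i
    using nth_foldr_klr_swap_cycle[of 2 b nu i] that assms by (simp add: nu2_def)
  show "foldr klr_swap (klr_word 0 2 b) nu ! b = nu ! 0"
    unfolding word using outer[of b] inner[of 0] assms by (cases nu) auto
  show "foldr klr_swap (klr_word 0 2 b) nu ! (b + 1) = nu ! 1"
    unfolding word using outer[of "b + 1"] inner[of "b + 1"] assms by simp
  show "foldr klr_swap (klr_word 0 2 b) nu ! (b + 2) = nu ! (b + 2)"
    unfolding word using outer[of "b + 2"] inner[of "b + 2"] assms by simp
qed

context
  fixes n :: nat and e :: "nat list \<Rightarrow> 'a::ring_1" and x psi :: "nat \<Rightarrow> 'a"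
  assumes klr: "is_klr_Cinf n e x psi"
begin

lemma klr_psi_e:
  "length nu = n \<Longrightarrow> 1 \<le> r \<Longrightarrow> r < n \<Longrightarrow> psi r * e nu = e (klr_swap r nu) * psi r"
  using klr by (simp add: is_klr_Cinf_def)

lemma klr_psi_commute:
  "1 \<le> r \<Longrightarrow> r < n \<Longrightarrow> 1 \<le> s \<Longrightarrow> s < n \<Longrightarrow> r + 1 < s \<or> s + 1 < r \<Longrightarrow>
    psi r * psi s = psi s * psi r"
  using klr by (auto simp: is_klr_Cinf_def)

lemma klr_braid:
  assumes "length nu = n" "1 \<le> r" "r + 1 < n"
  shows "psi (r + 1) * psi r * psi (r + 1) * e nu
      = psi r * psi (r + 1) * psi r * e nu
        + (if nu ! (r - 1) = nu ! (r + 1)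
           then klr_dd (nu ! (r - 1)) (nu ! r) (x r) (x (r + 1)) (x (r + 2)) else 0) * e nu"
proof -
  have "(psi (r + 1) * psi r * psi (r + 1) - psi r * psi (r + 1) * psi r) * e nu
      = (if nu ! (r - 1) = nu ! (r + 1)
         then klr_dd (nu ! (r - 1)) (nu ! r) (x r) (x (r + 1)) (x (r + 2)) * e nu else 0)"
    using klr assms unfolding is_klr_Cinf_def by blast
  then show ?thesis
    by (cases "nu ! (r - 1) = nu ! (r + 1)") (simp_all add: algebra_simps)
qed

lemma psi_commute_prod_list:
  assumes "r < n" "\<forall>j\<in>set ws. 1 \<le> j \<and> j + 1 < r"
  shows "psi r * prod_list (map psi ws) = prod_list (map psi ws) * psi r"
  using assms(2)
proof (induction ws)
  case Nil
  then show ?case by simp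
next
  case (Cons j ws)
  then have "psi r * psi j = psi j * psi r"
    using assms(1) by (intro klr_psi_commute) auto
  with Cons show ?case
    by (simp add: mult.assoc flip: mult.assoc[of "psi r"])
qed

lemma prod_list_psi_e:
  assumes "length nu = n" "\<forall>j\<in>set ws. 1 \<le> j \<and> j < n"
  shows "prod_list (map psi ws) * e nu = e (foldr klr_swap ws nu) * prod_list (map psi ws)"
  using assms(2)
proof (induction ws)
  case Nil
  then show ?case by simp
next
  case (Cons j ws)
  then have "psi j * e (foldr klr_swap ws nu) = e (foldr klr_swap (j # ws) nu) * psi j"
    using assms(1) by (simp add: klr_psi_e)
  with Cons show ?case
    by (simp add: mult.assoc flip: mult.assoc[of "psi j"])
qed

lemma Psi2_two_Suc:
  assumes "m + c + 2 < n"
  shows "Psi2 psi c 2 (Suc m) = psi (m + c + 1) * psi (m + c + 2) * Psi2 psi c 2 m"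
proof -
  let ?P1 = "prod_list (map psi (rev [c + 1..<c + 1 + m]))"
  let ?P2 = "prod_list (map psi (rev [c + 2..<c + 2 + m]))"
  have "rev [c + 1..<c + 1 + Suc m] = (m + c + 1) # rev [c + 1..<c + 1 + m]"
    "rev [c + 2..<c + 2 + Suc m] = (m + c + 2) # rev [c + 2..<c + 2 + m]"
    by simp_all
  then have "Psi2 psi c 2 (Suc m) = psi (m + c + 1) * ((?P1 * psi (m + c + 2)) * ?P2)"
    by (simp only: Psi2_def klr_word_two map_append prod_list.append list.map prod_list.Cons
        mult.assoc)
  also have "?P1 * psi (m + c + 2) = psi (m + c + 2) * ?P1"
    using assms by (intro psi_commute_prod_list[symmetric]) auto
  also have "psi (m + c + 1) * ((psi (m + c + 2) * ?P1) * ?P2)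
      = psi (m + c + 1) * psi (m + c + 2) * Psi2 psi c 2 m"
    by (simp only: Psi2_def klr_word_two map_append prod_list.append mult.assoc)
  finally show ?thesis .
qed

lemma Psi2_two_e:
  assumes "length nu = n" "b + 2 \<le> n"
  shows "Psi2 psi 0 2 b * e nu = e (foldr klr_swap (klr_word 0 2 b) nu) * Psi2 psi 0 2 b"
  unfolding Psi2_def using assms by (intro prod_list_psi_e) (auto simp: klr_word_two)

end

text \<open>The coefficient \<open>c\<^sub>k\<close> of the paper, as a function of the letters \<open>(\<mu>\<^sub>1, \<mu>\<^sub>2, \<nu>\<^sub>k) = (i, j, l)\<close>.\<close>
definition braid_coeff :: "(nat \<Rightarrow> 'a::ring_1) \<Rightarrow> nat \<Rightarrow> nat \<Rightarrow> nat \<Rightarrow> nat \<Rightarrow> 'a" where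
  "braid_coeff x k i j l =
     (if i = 1 \<and> j = 0 \<and> l = 1 then x k + x (k + 2)
      else if j \<noteq> 0 \<and> l = i \<and> (j = i + 1 \<or> i = j + 1) then 1 else 0)"

lemma braid_past_Psi2:
  fixes e :: "nat list \<Rightarrow> 'a::ring_1"
  assumes klr: "is_klr_Cinf n e x psi" and len: "length nu = n" and b: "b + 3 \<le> n"
  shows "psi (b + 2) * psi (b + 1) * psi (b + 2) * Psi2 psi 0 2 b * e nu
       = psi (b + 1) * psi (b + 2) * psi (b + 1) * Psi2 psi 0 2 b * e nu
         + braid_coeff x (b + 1) (nu ! 0) (nu ! 1) (nu ! (b + 2)) * Psi2 psi 0 2 b * e nu"
proof -
  define nu' where "nu' = foldr klr_swap (klr_word 0 2 b) nu"
  let ?P = "Psi2 psi 0 2 b" and ?c = "braid_coeff x (b + 1) (nu ! 0) (nu ! 1) (nu ! (b + 2))"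
  have move: "?P * e nu = e nu' * ?P"
    unfolding nu'_def using klr len b by (intro Psi2_two_e) auto
  have letters: "nu' ! b = nu ! 0" "nu' ! (b + 1) = nu ! 1" "nu' ! (b + 2) = nu ! (b + 2)"
    unfolding nu'_def using nth_foldr_klr_word_two len b by auto
  have "length nu' = n"
    using len by (simp add: nu'_def)
  then have "psi (b + 2) * psi (b + 1) * psi (b + 2) * e nu'
      = psi (b + 1) * psi (b + 2) * psi (b + 1) * e nu'
        + (if nu' ! b = nu' ! (b + 2)
           then klr_dd (nu' ! b) (nu' ! (b + 1)) (x (b + 1)) (x (b + 2)) (x (b + 3)) else 0) * e nu'"
    using klr_braid[OF klr, of nu' "b + 1"] b by (simp add: numeral_eq_Suc)
  also have "(if nu' ! b = nu' ! (b + 2)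
      then klr_dd (nu' ! b) (nu' ! (b + 1)) (x (b + 1)) (x (b + 2)) (x (b + 3)) else 0) = ?c"
    unfolding letters by (auto simp: klr_dd_def braid_coeff_def numeral_eq_Suc)
  finally have braid: "psi (b + 2) * psi (b + 1) * psi (b + 2) * e nu'
      = psi (b + 1) * psi (b + 2) * psi (b + 1) * e nu' + ?c * e nu'" .
  have "psi (b + 2) * psi (b + 1) * psi (b + 2) * ?P * e nu
      = (psi (b + 2) * psi (b + 1) * psi (b + 2) * e nu') * ?P"
    by (simp add: move mult.assoc)
  also have "\<dots> = (psi (b + 1) * psi (b + 2) * psi (b + 1) * e nu' + ?c * e nu') * ?P"
    by (simp only: braid)
  also have "\<dots> = psi (b + 1) * psi (b + 2) * psi (b + 1) * ?P * e nu + ?c * ?P * e nu"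
    by (simp add: distrib_right move mult.assoc)
  finally show ?thesis .
qed

lemma psi_Psi2_two:
  fixes e :: "nat list \<Rightarrow> 'a::ring_1"
  assumes klr: "is_klr_Cinf n e x psi" and len: "length nu = n"
  shows "b + 2 \<le> n \<Longrightarrow>
    psi (b + 1) * Psi2 psi 0 2 b * e nu
      = Psi2 psi 0 2 b * psi 1 * e nu
        + (\<Sum>k\<in>{1..b}. Psi2 psi k 2 (b - k) * braid_coeff x k (nu ! 0) (nu ! 1) (nu ! (k + 1))
             * Psi2 psi 0 2 (k - 1) * e nu)"
proof (induction b)
  case 0
  then show ?case by simp
next
  case (Suc b)
  let ?c = "\<lambda>k. braid_coeff x k (nu ! 0) (nu ! 1) (nu ! (k + 1))"
  let ?P = "Psi2 psi 0 2 b" and ?L = "psi (b + 1) * psi (b + 2)"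
  have b: "b + 3 \<le> n"
    using Suc.prems by simp
  have shift: "?L * Psi2 psi k 2 (b - k) = Psi2 psi k 2 (Suc b - k)" if "k \<in> {1..b}" for k
    using Psi2_two_Suc[OF klr, of "b - k" k] that b by (simp add: Suc_diff_le)
  have "psi (Suc b + 1) * Psi2 psi 0 2 (Suc b) * e nu
      = psi (b + 2) * psi (b + 1) * psi (b + 2) * ?P * e nu"
    using Psi2_two_Suc[OF klr, of b 0] b by (simp add: mult.assoc)
  also have "\<dots> = ?L * (psi (b + 1) * ?P * e nu) + ?c (b + 1) * ?P * e nu"
    using braid_past_Psi2[OF klr len b] by (simp add: mult.assoc)
  also have "\<dots> = ?L * ?P * psi 1 * e nu
      + (\<Sum>k\<in>{1..b}. ?L * Psi2 psi k 2 (b - k) * ?c k * Psi2 psi 0 2 (k - 1) * e nu)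
      + ?c (b + 1) * ?P * e nu"
    using Suc b by (simp add: distrib_left sum_distrib_left mult.assoc)
  also have "\<dots> = Psi2 psi 0 2 (Suc b) * psi 1 * e nu
      + (\<Sum>k\<in>{1..Suc b}. Psi2 psi k 2 (Suc b - k) * ?c k * Psi2 psi 0 2 (k - 1) * e nu)"
    using Psi2_two_Suc[OF klr, of b 0] b by (simp add: shift[simplified] add_ac)
  finally show ?case by simp
qed

theorem mainTheorem14:
  fixes e :: "nat list \<Rightarrow> 'a::ring_1" and x psi :: "nat \<Rightarrow> 'a"
    and b mu1 mu2 :: nat and nus :: "nat list"
  assumes "is_klr_Cinf (b + 2) e x psi"
    and "1 \<le> b"
    and "length nus = b"
  shows "psi (b + 1) * Psi2 psi 0 2 b * e ([mu1, mu2] @ nus)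
       = Psi2 psi 0 2 b * psi 1 * e ([mu1, mu2] @ nus)
         + (\<Sum>k\<in>{1..b}. Psi2 psi k 2 (b - k)
              * (if mu1 = 1 \<and> mu2 = 0 \<and> nus ! (k - 1) = 1 then x k + x (k + 2)
                 else if mu2 \<noteq> 0 \<and> nus ! (k - 1) = mu1 \<and> (mu2 = mu1 + 1 \<or> mu1 = mu2 + 1) then 1
                 else 0)
              * Psi2 psi 0 2 (k - 1) * e ([mu1, mu2] @ nus))"
proof -
  have "psi (b + 1) * Psi2 psi 0 2 b * e ([mu1, mu2] @ nus)
      = Psi2 psi 0 2 b * psi 1 * e ([mu1, mu2] @ nus)
        + (\<Sum>k\<in>{1..b}. Psi2 psi k 2 (b - k) * braid_coeff x k mu1 mu2 (nus ! (k - 1))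
             * Psi2 psi 0 2 (k - 1) * e ([mu1, mu2] @ nus))"
    using psi_Psi2_two[OF assms(1), of "[mu1, mu2] @ nus" b] assms(3) by (simp add: nth_Cons')
  then show ?thesis
    by (simp only: braid_coeff_def)
qed

end
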